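(* Let $0<\beta<2$, $d\in\mathbb{N}$, $\kappa\in\mathbb{R}$ and $N\in(0,\infty)$. Suppose that \[\frac1N(\mathcal{L}u(x))^2\le \Gamma_2(u)(x)+\kappa\,\Gamma(u)(x)\] holds for all $u\in C_c^\infty(\mathbb{R}^d)$ and all $x\in\mathbb{R}^d$ (i.e. $\mathcal{L}$ satisfies $CD(\kappa,N)$). Then \[\frac1N(\mathcal{L}u(x))^2\le \Gamma_2(u)(x)\] for all $u\in C_c^\infty(\mathbb{R}^d)$ and all $x\in\mathbb{R}^d$, i.e. $\mathcal{L}$ satisfies $CD(0,N)$.
   Context: $c_{\beta,d}=\frac{2^\beta\Gamma(\frac{d+\beta}{2})}{\pi^{d/2}|\Gamma(-\frac{\beta}{2})|}$; $\mathcal{L}u(x)=c_{\beta,d}\int_{\mathbb{R}^d}\frac{u(x+h)-2u(x)+u(x-h)}{|h|^{d+\beta}}dh$; $\Gamma(u)(x)=c_{\beta,d}\int_{\mathbb{R}^d}\frac{(u(x+h)-u(x))^2}{|h|^{d+\beta}}dh$; $\Gamma_2(u)(x)=c_{\beta,d}^2\int_{\mathbb{R}^d}\int_{\mathbb{R}^d}\frac{[u(x+h+\sigma)-u(x+h)-u(x+\sigma)+u(x)]^2}{|h|^{d+\beta}|\sigma|^{d+\beta}}dh\,d\sigma$. *)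

theory Defs
  imports "HOL-Analysis.Analysis"
begin

fun Ck :: "nat \<Rightarrow> ('a::euclidean_space \<Rightarrow> real) \<Rightarrow> bool" where
  "Ck 0 f = continuous_on UNIV f"
| "Ck (Suc k) f = (continuous_on UNIV f \<and> (\<forall>x. f differentiable (at x)) \<and>
      (\<forall>v. Ck k (\<lambda>x. frechet_derivative f (at x) v)))"

definition smooth_compact :: "('a::euclidean_space \<Rightarrow> real) \<Rightarrow> bool" where
  "smooth_compact u \<longleftrightarrow> (\<forall>k. Ck k u) \<and> compact (closure {x. u x \<noteq> 0})"

definition c_const :: "real \<Rightarrow> nat \<Rightarrow> real" where
  "c_const \<beta> d = 2 powr \<beta> * Gamma ((real d + \<beta>) / 2)
      / (pi powr (real d / 2) * \<bar>Gamma (- \<beta> / 2)\<bar>)"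

definition fracL :: "real \<Rightarrow> ('a::euclidean_space \<Rightarrow> real) \<Rightarrow> 'a \<Rightarrow> real" where
  "fracL \<beta> u x = c_const \<beta> DIM('a) *
     (LINT h|lborel. (u (x + h) - 2 * u x + u (x - h)) / norm h powr (real DIM('a) + \<beta>))"

definition Gam :: "real \<Rightarrow> ('a::euclidean_space \<Rightarrow> real) \<Rightarrow> 'a \<Rightarrow> real" where
  "Gam \<beta> u x = c_const \<beta> DIM('a) *
     (LINT h|lborel. (u (x + h) - u x)\<^sup>2 / norm h powr (real DIM('a) + \<beta>))"

definition Gam2 :: "real \<Rightarrow> ('a::euclidean_space \<Rightarrow> real) \<Rightarrow> 'a \<Rightarrow> real" where
  "Gam2 \<beta> u x = (c_const \<beta> DIM('a))\<^sup>2 *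
     (LINT \<sigma>|lborel. LINT h|lborel.
        (u (x + h + \<sigma>) - u (x + h) - u (x + \<sigma>) + u x)\<^sup>2
        / (norm h powr (real DIM('a) + \<beta>) * norm \<sigma> powr (real DIM('a) + \<beta>)))"

end

theory Submission
  imports Defs
begin

text \<open>
  Under the dilation \<open>u \<mapsto> u(c \<cdot>)\<close> the kernel \<open>|h|^{-(d+\<beta>)}\<close> makes \<open>\<L>\<close> and \<open>\<Gamma>\<close>
  homogeneous of degree \<open>\<beta>\<close> in \<open>c\<close> and \<open>\<Gamma>\<^sub>2\<close> homogeneous of degree \<open>2\<beta>\<close>. Applying
  \<open>CD(\<kappa>,N)\<close> to the dilated function and dividing by \<open>c^{2\<beta>}\<close> leaves the curvature term
  with the factor \<open>c^{-\<beta>}\<close>, which vanishes as \<open>c \<rightarrow> \<infinity>\<close>.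
\<close>

lemma nn_integral_affine:
  fixes f :: "'a::euclidean_space \<Rightarrow> ennreal"
  assumes [measurable]: "f \<in> borel_measurable borel" and c: "c \<noteq> 0"
  shows "(\<integral>\<^sup>+x. f x \<partial>lborel) = ennreal (\<bar>c\<bar> ^ DIM('a)) * (\<integral>\<^sup>+x. f (t + c *\<^sub>R x) \<partial>lborel)"
  by (subst lborel_affine[OF c, of t])
     (simp add: nn_integral_density nn_integral_distr nn_integral_cmult)

lemma lborel_integrable_affine:
  fixes f :: "'a::euclidean_space \<Rightarrow> 'b::{banach, second_countable_topology}"
  assumes f: "integrable lborel f" and c: "c \<noteq> 0"
  shows "integrable lborel (\<lambda>x. f (t + c *\<^sub>R x))"
  using f f[THEN borel_measurable_integrable] c unfolding integrable_iff_bounded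
  by (subst (asm) nn_integral_affine[where c=c and t=t]) (auto simp: ennreal_mult_less_top)

lemma lborel_integrable_affine_iff:
  fixes f :: "'a::euclidean_space \<Rightarrow> 'b::{banach, second_countable_topology}"
  assumes c: "c \<noteq> 0"
  shows "integrable lborel (\<lambda>x. f (t + c *\<^sub>R x)) \<longleftrightarrow> integrable lborel f"
  using lborel_integrable_affine[of f c t]
    lborel_integrable_affine[of "\<lambda>x. f (t + c *\<^sub>R x)" "1/c" "-(1/c) *\<^sub>R t"] c
  by (auto simp: algebra_simps)

lemma lborel_integral_affine:
  fixes f :: "'a::euclidean_space \<Rightarrow> 'b::{banach, second_countable_topology}"
  assumes c: "c \<noteq> 0"
  shows "(\<integral>x. f x \<partial>lborel) = \<bar>c\<bar> ^ DIM('a) *\<^sub>R (\<integral>x. f (t + c *\<^sub>R x) \<partial>lborel)"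
proof cases
  assume f[measurable]: "integrable lborel f"
  then show ?thesis
    using c f[THEN borel_measurable_integrable] lborel_integrable_affine[OF f c, of t]
    by (subst lborel_affine[OF c, of t]) (simp add: integral_density integral_distr)
next
  assume "\<not> integrable lborel f"
  with c show ?thesis
    by (simp add: lborel_integrable_affine_iff not_integrable_integral_eq)
qed

lemma lborel_integral_dilation_kernel:
  fixes g :: "'a::euclidean_space \<Rightarrow> real"
  assumes c: "c > 0"
  shows "(LINT h|lborel. c powr (real DIM('a) + \<beta>) * g (c *\<^sub>R h)) = c powr \<beta> * (LINT k|lborel. g k)"
proof -
  have "(LINT k|lborel. g k) = c ^ DIM('a) * (LINT h|lborel. g (c *\<^sub>R h))"
    using lborel_integral_affine[of c g 0] c by simp
  moreover have "c powr (real DIM('a) + \<beta>) = c ^ DIM('a) * c powr \<beta>"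
    using c by (simp add: powr_add powr_realpow)
  ultimately show ?thesis by simp
qed

lemma fracL_dilation:
  fixes u :: "'a::euclidean_space \<Rightarrow> real"
  assumes c: "c > 0"
  shows "fracL \<beta> (\<lambda>y. u (c *\<^sub>R y)) x = c powr \<beta> * fracL \<beta> u (c *\<^sub>R x)"
proof -
  define g where "g k = (u (c *\<^sub>R x + k) - 2 * u (c *\<^sub>R x) + u (c *\<^sub>R x - k))
      / norm k powr (real DIM('a) + \<beta>)" for k
  have integrand: "(u (c *\<^sub>R (x + h)) - 2 * u (c *\<^sub>R x) + u (c *\<^sub>R (x - h)))
      / norm h powr (real DIM('a) + \<beta>) = c powr (real DIM('a) + \<beta>) * g (c *\<^sub>R h)" for h
    using c by (simp add: g_def scaleR_add_right scaleR_diff_right powr_mult)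
  show ?thesis
    unfolding fracL_def integrand lborel_integral_dilation_kernel[OF c] by (simp add: g_def[abs_def])
qed

lemma Gam_dilation:
  fixes u :: "'a::euclidean_space \<Rightarrow> real"
  assumes c: "c > 0"
  shows "Gam \<beta> (\<lambda>y. u (c *\<^sub>R y)) x = c powr \<beta> * Gam \<beta> u (c *\<^sub>R x)"
proof -
  define g where "g k = (u (c *\<^sub>R x + k) - u (c *\<^sub>R x))\<^sup>2 / norm k powr (real DIM('a) + \<beta>)" for k
  have integrand: "(u (c *\<^sub>R (x + h)) - u (c *\<^sub>R x))\<^sup>2 / norm h powr (real DIM('a) + \<beta>)
      = c powr (real DIM('a) + \<beta>) * g (c *\<^sub>R h)" for h
    using c by (simp add: g_def scaleR_add_right powr_mult)
  show ?thesis
    unfolding Gam_def integrand lborel_integral_dilation_kernel[OF c] by (simp add: g_def[abs_def])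
qed

lemma Gam2_dilation:
  fixes u :: "'a::euclidean_space \<Rightarrow> real"
  assumes c: "c > 0"
  shows "Gam2 \<beta> (\<lambda>y. u (c *\<^sub>R y)) x = (c powr \<beta>)\<^sup>2 * Gam2 \<beta> u (c *\<^sub>R x)"
proof -
  define P where "P = real DIM('a) + \<beta>"
  define g where "g k s = (u (c *\<^sub>R x + k + s) - u (c *\<^sub>R x + k) - u (c *\<^sub>R x + s) + u (c *\<^sub>R x))\<^sup>2
      / (norm k powr P * norm s powr P)" for k s
  define H where "H s = (LINT k|lborel. g k s)" for s
  have integrand: "(u (c *\<^sub>R (x + h + \<sigma>)) - u (c *\<^sub>R (x + h)) - u (c *\<^sub>R (x + \<sigma>)) + u (c *\<^sub>R x))\<^sup>2
      / (norm h powr P * norm \<sigma> powr P) = c powr P * (c powr P * g (c *\<^sub>R h) (c *\<^sub>R \<sigma>))" for h \<sigma>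
    using c by (simp add: g_def scaleR_add_right powr_mult)
  have inner: "(LINT h|lborel. c powr P * (c powr P * g (c *\<^sub>R h) (c *\<^sub>R \<sigma>)))
      = c powr \<beta> * (c powr P * H (c *\<^sub>R \<sigma>))" for \<sigma>
    using lborel_integral_dilation_kernel[OF c, of \<beta> "\<lambda>k. g k (c *\<^sub>R \<sigma>)"]
    by (simp add: P_def H_def)
  have outer: "(LINT \<sigma>|lborel. c powr \<beta> * (c powr P * H (c *\<^sub>R \<sigma>)))
      = c powr \<beta> * (c powr \<beta> * (LINT s|lborel. H s))"
    using lborel_integral_dilation_kernel[OF c, of \<beta> H] by (simp add: P_def)
  show ?thesis
    unfolding Gam2_def P_def[symmetric]
    by (simp only: integrand inner outer) (simp add: H_def g_def power2_eq_square)
qed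

text \<open>The factor \<open>a\<close> is needed for the induction: each derivative of the dilation picks up \<open>c\<close>.\<close>

lemma Ck_dilation:
  fixes f :: "'a::euclidean_space \<Rightarrow> real"
  assumes "Ck k f"
  shows "Ck k (\<lambda>x. a * f (c *\<^sub>R x))"
  using assms
proof (induction k arbitrary: f a)
  case 0
  then show ?case by (auto intro!: continuous_intros continuous_on_compose2[of UNIV f])
next
  case (Suc k)
  then have cont: "continuous_on UNIV f" and diff: "\<And>x. f differentiable (at x)"
    and deriv: "\<And>v. Ck k (\<lambda>x. frechet_derivative f (at x) v)" by auto
  have has_deriv: "((\<lambda>x. a * f (c *\<^sub>R x)) has_derivative
      (\<lambda>v. a * frechet_derivative f (at (c *\<^sub>R x)) (c *\<^sub>R v))) (at x)" for x
  proof -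
    have "(f has_derivative frechet_derivative f (at (c *\<^sub>R x))) (at (c *\<^sub>R x))"
      using diff frechet_derivative_works by blast
    then have "((\<lambda>x. f (c *\<^sub>R x)) has_derivative
        (\<lambda>v. frechet_derivative f (at (c *\<^sub>R x)) (c *\<^sub>R v))) (at x)"
      using has_derivative_compose[of "\<lambda>x. c *\<^sub>R x" "\<lambda>v. c *\<^sub>R v" x UNIV f]
        bounded_linear_imp_has_derivative[OF bounded_linear_scaleR_right[of c]]
      by blast
    then show ?thesis by (auto intro!: derivative_eq_intros)
  qed
  have frechet: "frechet_derivative (\<lambda>x. a * f (c *\<^sub>R x)) (at x) v =
      (a * c) * frechet_derivative f (at (c *\<^sub>R x)) v" for x v
  proof -
    have "linear (frechet_derivative f (at (c *\<^sub>R x)))"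
      using diff frechet_derivative_works has_derivative_linear by blast
    then show ?thesis
      using frechet_derivative_at[OF has_deriv[of x]] linear_cmul by (metis mult.assoc real_scaleR_def)
  qed
  show ?case
    using cont has_deriv deriv Suc.IH
    by (auto simp: frechet differentiable_def
        intro!: continuous_intros continuous_on_compose2[of UNIV f])
qed

lemma smooth_compact_dilation:
  fixes u :: "'a::euclidean_space \<Rightarrow> real"
  assumes u: "smooth_compact u" and c: "c > 0"
  shows "smooth_compact (\<lambda>y. u (c *\<^sub>R y))"
proof -
  have "Ck k (\<lambda>y. u (c *\<^sub>R y))" for k
    using Ck_dilation[of k u 1 c] u by (simp add: smooth_compact_def)
  moreover have "{y. u (c *\<^sub>R y) \<noteq> 0} = (*\<^sub>R) (1/c) ` {x. u x \<noteq> 0}"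
    using c by (auto intro!: image_eqI[where x="c *\<^sub>R y" for y])
  ultimately show ?thesis
    using u unfolding smooth_compact_def by (metis closure_scaleR compact_scaling)
qed

lemma le_of_le_add_mult_pos:
  fixes A B K :: real
  assumes "\<And>t. t > 0 \<Longrightarrow> A \<le> B + K * t"
  shows "A \<le> B"
proof (rule field_le_epsilon)
  fix e :: real
  assume e: "e > 0"
  define t where "t = e / (\<bar>K\<bar> + 1)"
  have t: "t > 0" using e by (simp add: t_def)
  have "K * t \<le> (\<bar>K\<bar> + 1) * t" using t by (intro mult_right_mono) auto
  also have "\<dots> = e" by (simp add: t_def)
  finally show "A \<le> B + e" using assms[OF t] by simp
qed

theorem proposition2p3:
  fixes \<beta> \<kappa> N :: real
  assumes "0 < \<beta>" and "\<beta> < 2" and "0 < N"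
    and CD: "\<And>(u :: 'a::euclidean_space \<Rightarrow> real) x. smooth_compact u \<Longrightarrow>
       (fracL \<beta> u x)\<^sup>2 / N \<le> Gam2 \<beta> u x + \<kappa> * Gam \<beta> u x"
  shows "\<And>(u :: 'a \<Rightarrow> real) x. smooth_compact u \<Longrightarrow>
       (fracL \<beta> u x)\<^sup>2 / N \<le> Gam2 \<beta> u x"
proof -
  fix u :: "'a \<Rightarrow> real" and x
  assume u: "smooth_compact u"
  show "(fracL \<beta> u x)\<^sup>2 / N \<le> Gam2 \<beta> u x"
  proof (rule le_of_le_add_mult_pos[where K="\<kappa> * Gam \<beta> u x"])
    fix t :: real
    assume t: "t > 0"
    define c where "c = (1 / t) powr (1 / \<beta>)"
    have c: "c > 0" and ct: "c powr \<beta> = 1 / t"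
      using t \<open>0 < \<beta>\<close> by (simp_all add: c_def powr_powr)
    have "(fracL \<beta> u x)\<^sup>2 / N / t\<^sup>2 \<le> Gam2 \<beta> u x / t\<^sup>2 + \<kappa> * (Gam \<beta> u x / t)"
      using c CD[OF smooth_compact_dilation[OF u c], of "(1/c) *\<^sub>R x"]
      by (simp add: fracL_dilation[OF c] Gam_dilation[OF c] Gam2_dilation[OF c] ct power_divide mult.commute)
    also have "Gam2 \<beta> u x / t\<^sup>2 + \<kappa> * (Gam \<beta> u x / t)
        = (Gam2 \<beta> u x + \<kappa> * Gam \<beta> u x * t) / t\<^sup>2"
      using t by (simp add: field_simps power2_eq_square)
    finally show "(fracL \<beta> u x)\<^sup>2 / N \<le> Gam2 \<beta> u x + \<kappa> * Gam \<beta> u x * t"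
      using t by (simp add: divide_le_cancel flip: divide_divide_eq_left)
  qed
qed

end
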